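(* Let $\mathcal H_A$ be a finite-dimensional Hilbert space, $N\ge 1$, and let $\mathcal F(A)\subseteq\mathcal D(\mathcal H_A)$ be a set of free states and $\mathcal F(A_1\dots A_N)\subseteq\mathcal D(\mathcal H_A^{\otimes N})$ a set of $N$-partite free states. Let $\mathcal F'(A)\subseteq\mathcal F(A)$ be affine and let $\Delta'$ be a resource-censoring map for $(\mathcal F(A),\mathcal F'(A))$ satisfying the standing assumptions below. Then the censorship implemented by $(\Delta')^{\otimes N}$ is breakable if and only if $\mathcal F'(A_1\dots A_N)\setminus\mathcal F(A_1\dots A_N)\neq\emptyset$, where $\mathcal F'(A_1\dots A_N)=\mathrm{Aff}\big(\mathcal F'(A)\otimes\dots\otimes\mathcal F'(A)\big)$ ($N$ factors).
   Context: For a finite-dimensional Hilbert space $\mathcal H$, $\mathcal D(\mathcal H)$ denotes the set of density operators (positive semidefinite, unit trace) on $\mathcal H$. For a set $S\subseteq\mathcal D(\mathcal H)$, its affine hull is $\mathrm{Aff}(S)=\{\sum_a t_a\sigma_a:\ \text{finitely many }\sigma_a\in S,\ t_a\in\mathbb R,\ \sum_a t_a=1\}\cap\mathcal D(\mathcal H)$, and its convex hull $\mathrm{Conv}(S)$ is defined the same way but with $t_a\ge 0$. A set $S$ is called affine if $\mathrm{Aff}(S)=S$. For sets $S_1,\dots,S_N$ of states, $S_1\otimes\dots\otimes S_N=\{\rho_1\otimes\dots\otimes\rho_N:\rho_a\in S_a\}$. A channel is a linear completely positive trace-preserving map. Each of $N$ senders $A_1,\dots,A_N$ holds a copy of the system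 $A$ (Hilbert space $\mathcal H_A$). A resource-censoring (RC) map for $(\mathcal F(A),\mathcal F'(A))$, with $\mathcal F'(A)\subseteq\mathcal F(A)$ affine, is a channel $\Delta'$ on operators on $\mathcal H_A$ with $\Delta'(\rho)\in\mathcal F(A)$ for all $\rho\in\mathcal D(\mathcal H_A)$ and $\Delta'(\sigma)=\sigma$ for all $\sigma\in\mathcal F'(A)$. Standing assumptions: $\Delta'\circ\Delta'=\Delta'$, and $\mathcal F'(A)$ is exactly the set of density operators fixed by $\Delta'$. The censorship is called breakable if there exists $\rho\in\mathcal D(\mathcal H_A^{\otimes N})$ with $\rho\notin\mathcal F(A_1\dots A_N)$ and $(\Delta')^{\otimes N}(\rho)=\rho$; otherwise it is called unbreakable. *)

theory Defs
  imports Complex_Main "Jordan_Normal_Form.Matrix"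
begin

text \<open>Operators on an n-dimensional Hilbert space C^n are n x n complex matrices.\<close>

definition psd :: "nat \<Rightarrow> complex mat \<Rightarrow> bool" where
  "psd n A \<longleftrightarrow> A \<in> carrier_mat n n \<and>
     (\<forall>v \<in> carrier_vec n.
        let q = (\<Sum>i<n. \<Sum>j<n. cnj (v $ i) * A $$ (i, j) * v $ j)
        in Im q = 0 \<and> Re q \<ge> 0)"

definition tr :: "complex mat \<Rightarrow> complex" where
  "tr A = (\<Sum>i<dim_row A. A $$ (i, i))"

definition density :: "nat \<Rightarrow> complex mat \<Rightarrow> bool" where
  "density n \<rho> \<longleftrightarrow> psd n \<rho> \<and> tr \<rho> = 1"

definition Dens :: "nat \<Rightarrow> complex mat set" where
  "Dens n = {\<rho>. density n \<rho>}"

text \<open>Affine hull (intersected with the density operators), real affine coefficients.\<close>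
definition Aff :: "nat \<Rightarrow> complex mat set \<Rightarrow> complex mat set" where
  "Aff n S = {\<rho>. density n \<rho> \<and>
     (\<exists>k (t :: nat \<Rightarrow> real) (\<sigma> :: nat \<Rightarrow> complex mat).
        (\<forall>a<k. \<sigma> a \<in> S) \<and> (\<Sum>a<k. t a) = 1 \<and>
        \<rho> = mat n n (\<lambda>(p, q). \<Sum>a<k. complex_of_real (t a) * \<sigma> a $$ (p, q)))}"

definition affine_set :: "nat \<Rightarrow> complex mat set \<Rightarrow> bool" where
  "affine_set n S \<longleftrightarrow> Aff n S = S"

text \<open>Kronecker (tensor) product; index of C^m (x) C^n is i*n+k.\<close>
definition kron :: "complex mat \<Rightarrow> complex mat \<Rightarrow> complex mat" where
  "kron A B = mat (dim_row A * dim_row B) (dim_col A * dim_col B)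
     (\<lambda>(p, q). A $$ (p div dim_row B, q div dim_col B) * B $$ (p mod dim_row B, q mod dim_col B))"

fun tensor_list :: "complex mat list \<Rightarrow> complex mat" where
  "tensor_list [] = 1\<^sub>m 1"
| "tensor_list (\<rho> # \<rho>s) = kron \<rho> (tensor_list \<rho>s)"

definition tensor_pow_set :: "complex mat set \<Rightarrow> nat \<Rightarrow> complex mat set" where
  "tensor_pow_set S N = {tensor_list \<rho>s | \<rho>s. length \<rho>s = N \<and> set \<rho>s \<subseteq> S}"

definition unit_op :: "nat \<Rightarrow> nat \<Rightarrow> nat \<Rightarrow> complex mat" where
  "unit_op m i j = mat m m (\<lambda>(a, b). if a = i \<and> b = j then 1 else 0)"

text \<open>Tensor product of linear maps Phi (on m x m) and Psi (on n x n): the unique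
  linear extension of X (x) Y \<mapsto> Phi X (x) Psi Y, written through matrix units.\<close>
definition map_tensor :: "nat \<Rightarrow> (complex mat \<Rightarrow> complex mat) \<Rightarrow> nat \<Rightarrow> (complex mat \<Rightarrow> complex mat)
    \<Rightarrow> complex mat \<Rightarrow> complex mat" where
  "map_tensor m \<Phi> n \<Psi> X = mat (m * n) (m * n) (\<lambda>(p, q).
     \<Sum>i<m. \<Sum>j<m. \<Sum>k<n. \<Sum>l<n.
       X $$ (i * n + k, j * n + l) * \<Phi> (unit_op m i j) $$ (p div n, q div n)
         * \<Psi> (unit_op n k l) $$ (p mod n, q mod n))"

fun map_tensor_pow :: "nat \<Rightarrow> (complex mat \<Rightarrow> complex mat) \<Rightarrow> nat \<Rightarrow> complex mat \<Rightarrow> complex mat" where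
  "map_tensor_pow d \<Phi> 0 = (\<lambda>X. X)"
| "map_tensor_pow d \<Phi> (Suc N) = map_tensor d \<Phi> (d ^ N) (map_tensor_pow d \<Phi> N)"

definition linear_op_map :: "nat \<Rightarrow> (complex mat \<Rightarrow> complex mat) \<Rightarrow> bool" where
  "linear_op_map d \<Phi> \<longleftrightarrow>
     (\<forall>X \<in> carrier_mat d d. \<Phi> X \<in> carrier_mat d d) \<and>
     (\<forall>X \<in> carrier_mat d d. \<forall>Y \<in> carrier_mat d d. \<forall>a b :: complex.
        \<Phi> (a \<cdot>\<^sub>m X + b \<cdot>\<^sub>m Y) = a \<cdot>\<^sub>m \<Phi> X + b \<cdot>\<^sub>m \<Phi> Y)"

definition completely_positive :: "nat \<Rightarrow> (complex mat \<Rightarrow> complex mat) \<Rightarrow> bool" where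
  "completely_positive d \<Phi> \<longleftrightarrow>
     (\<forall>k. \<forall>X. psd (k * d) X \<longrightarrow> psd (k * d) (map_tensor k (\<lambda>Y. Y) d \<Phi> X))"

definition trace_preserving :: "nat \<Rightarrow> (complex mat \<Rightarrow> complex mat) \<Rightarrow> bool" where
  "trace_preserving d \<Phi> \<longleftrightarrow> (\<forall>X \<in> carrier_mat d d. tr (\<Phi> X) = tr X)"

definition channel :: "nat \<Rightarrow> (complex mat \<Rightarrow> complex mat) \<Rightarrow> bool" where
  "channel d \<Phi> \<longleftrightarrow> linear_op_map d \<Phi> \<and> completely_positive d \<Phi> \<and> trace_preserving d \<Phi>"

definition RC_map :: "nat \<Rightarrow> complex mat set \<Rightarrow> complex mat set \<Rightarrow> (complex mat \<Rightarrow> complex mat) \<Rightarrow> bool" where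
  "RC_map d F F' \<Delta> \<longleftrightarrow> channel d \<Delta> \<and> (\<forall>\<rho> \<in> Dens d. \<Delta> \<rho> \<in> F) \<and> (\<forall>\<sigma> \<in> F'. \<Delta> \<sigma> = \<sigma>)"

definition breakable :: "nat \<Rightarrow> nat \<Rightarrow> complex mat set \<Rightarrow> (complex mat \<Rightarrow> complex mat) \<Rightarrow> bool" where
  "breakable d N FN \<Delta> \<longleftrightarrow>
     (\<exists>\<rho> \<in> Dens (d ^ N). \<rho> \<notin> FN \<and> map_tensor_pow d \<Delta> N \<rho> = \<rho>)"

end

theory Submission
  imports Defs
begin

text \<open>Since \<open>\<Delta>'\<close> is idempotent and \<open>\<F>'(A)\<close> is its set of fixed densities, \<open>\<Delta>'\<close> maps every
  density into \<open>\<F>'(A)\<close>; as densities span all operators, \<open>\<Delta>'\<close> maps every operator into the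
  complex span of \<open>\<F>'(A)\<close>, hence \<open>(\<Delta>')\<^sup>\<otimes>\<^sup>N\<close> maps every operator into the complex span of the
  product states \<open>\<F>'(A)\<^sup>\<otimes>\<^sup>N\<close>. A fixed density is thus a complex combination of product states;
  these are Hermitian of unit trace, so the real parts of the coefficients already form an affine
  combination. Conversely, the affine hull is fixed by linearity. So the fixed densities of
  \<open>(\<Delta>')\<^sup>\<otimes>\<^sup>N\<close> are exactly \<open>\<F>'(A\<^sub>1\<dots>A\<^sub>N)\<close>.\<close>

section \<open>Linear maps on square matrices\<close>

lemma linear_op_map_carrier: "linear_op_map n \<Phi> \<Longrightarrow> X \<in> carrier_mat n n \<Longrightarrow> \<Phi> X \<in> carrier_mat n n"
  unfolding linear_op_map_def by blast

lemma linear_op_map_add: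
  assumes "linear_op_map n \<Phi>" "X \<in> carrier_mat n n" "Y \<in> carrier_mat n n"
  shows "\<Phi> (X + Y) = \<Phi> X + \<Phi> Y"
proof -
  have "\<Phi> (1 \<cdot>\<^sub>m X + 1 \<cdot>\<^sub>m Y) = 1 \<cdot>\<^sub>m \<Phi> X + 1 \<cdot>\<^sub>m \<Phi> Y"
    using assms unfolding linear_op_map_def by blast
  moreover have "1 \<cdot>\<^sub>m A = A" for A :: "complex mat" by (intro eq_matI) auto
  ultimately show ?thesis by simp
qed

lemma linear_op_map_smult:
  assumes "linear_op_map n \<Phi>" "X \<in> carrier_mat n n"
  shows "\<Phi> (c \<cdot>\<^sub>m X) = c \<cdot>\<^sub>m \<Phi> X"
proof -
  have "\<Phi> (c \<cdot>\<^sub>m X + 0 \<cdot>\<^sub>m X) = c \<cdot>\<^sub>m \<Phi> X + 0 \<cdot>\<^sub>m \<Phi> X"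
    using assms unfolding linear_op_map_def by blast
  moreover have "A + 0 \<cdot>\<^sub>m B = A" if "A \<in> carrier_mat n n" "B \<in> carrier_mat n n" for A B :: "complex mat"
    using that by (intro eq_matI) auto
  ultimately show ?thesis using assms by (simp add: linear_op_map_carrier)
qed

lemma linear_op_map_zero:
  assumes "linear_op_map n \<Phi>"
  shows "\<Phi> (0\<^sub>m n n) = 0\<^sub>m n n"
proof -
  have "\<Phi> (0 \<cdot>\<^sub>m 0\<^sub>m n n) = 0 \<cdot>\<^sub>m \<Phi> (0\<^sub>m n n)"
    using linear_op_map_smult[OF assms zero_carrier_mat] .
  moreover have "0 \<cdot>\<^sub>m \<Phi> (0\<^sub>m n n) = 0\<^sub>m n n"
    using linear_op_map_carrier[OF assms zero_carrier_mat] by (intro eq_matI) auto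
  ultimately show ?thesis by simp
qed

lemma mat_combination_insert:
  assumes "finite I" "x \<notin> I" "X x \<in> carrier_mat n n"
  shows "mat n n (\<lambda>(p, q). \<Sum>i\<in>insert x I. c i * X i $$ (p, q))
    = c x \<cdot>\<^sub>m X x + mat n n (\<lambda>(p, q). \<Sum>i\<in>I. c i * X i $$ (p, q))"
  using assms by (intro eq_matI) auto

lemma linear_op_map_combination:
  fixes X :: "'i \<Rightarrow> complex mat"
  assumes "linear_op_map n \<Phi>" "finite I" "\<And>i. i \<in> I \<Longrightarrow> X i \<in> carrier_mat n n"
  shows "\<Phi> (mat n n (\<lambda>(p, q). \<Sum>i\<in>I. c i * X i $$ (p, q)))
    = mat n n (\<lambda>(p, q). \<Sum>i\<in>I. c i * \<Phi> (X i) $$ (p, q))"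
  using assms(2,3)
proof (induction I rule: finite_induct)
  case empty
  have "mat n n (\<lambda>_. 0) = (0\<^sub>m n n :: complex mat)" by (intro eq_matI) auto
  then show ?case using linear_op_map_zero[OF assms(1)] by simp
next
  case (insert x I)
  have X: "X x \<in> carrier_mat n n" using insert.prems by simp
  have \<Phi>X: "\<Phi> (X x) \<in> carrier_mat n n" using linear_op_map_carrier[OF assms(1) X] .
  have IH: "\<Phi> (mat n n (\<lambda>(p, q). \<Sum>i\<in>I. c i * X i $$ (p, q)))
      = mat n n (\<lambda>(p, q). \<Sum>i\<in>I. c i * \<Phi> (X i) $$ (p, q))"
    by (rule insert.IH) (use insert.prems in auto)
  show ?case
    unfolding mat_combination_insert[where X = X, OF insert(1,2) X]
      mat_combination_insert[where X = "\<lambda>i. \<Phi> (X i)", OF insert(1,2) \<Phi>X]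
    by (simp add: linear_op_map_add[OF assms(1)] linear_op_map_smult[OF assms(1) X] IH X)
qed

section \<open>Kronecker products and tensor products of maps\<close>

lemma index_block_less: "(i::nat) < m \<Longrightarrow> k < n \<Longrightarrow> i * n + k < m * n"
proof -
  assume "i < m" "k < n"
  moreover have "Suc i * n \<le> m * n" using \<open>i < m\<close> by (intro mult_le_mono1) simp
  ultimately show ?thesis by simp
qed

lemma kron_carrier_mat:
  "A \<in> carrier_mat m m \<Longrightarrow> B \<in> carrier_mat n n \<Longrightarrow> kron A B \<in> carrier_mat (m * n) (m * n)"
  unfolding kron_def by auto

lemma index_kron:
  "A \<in> carrier_mat m m \<Longrightarrow> B \<in> carrier_mat n n \<Longrightarrow> p < m * n \<Longrightarrow> q < m * n \<Longrightarrow>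
   kron A B $$ (p, q) = A $$ (p div n, q div n) * B $$ (p mod n, q mod n)"
  unfolding kron_def by auto

lemma index_kron_block:
  "A \<in> carrier_mat m m \<Longrightarrow> B \<in> carrier_mat n n \<Longrightarrow> i < m \<Longrightarrow> j < m \<Longrightarrow> k < n \<Longrightarrow> l < n \<Longrightarrow>
   kron A B $$ (i * n + k, j * n + l) = A $$ (i, j) * B $$ (k, l)"
  by (subst index_kron[of A m B n]) (auto simp: index_block_less)

lemma kron_zero_left: "B \<in> carrier_mat n n \<Longrightarrow> kron (0\<^sub>m m m) B = 0\<^sub>m (m * n) (m * n)"
  by (intro eq_matI) (auto simp: kron_def less_mult_imp_div_less)

lemma kron_zero_right: "A \<in> carrier_mat m m \<Longrightarrow> kron A (0\<^sub>m n n) = 0\<^sub>m (m * n) (m * n)"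
proof (intro eq_matI)
  fix i j assume "A \<in> carrier_mat m m" "i < dim_row (0\<^sub>m (m * n) (m * n))" "j < dim_col (0\<^sub>m (m * n) (m * n))"
  moreover from this have "n > 0" by (cases n) auto
  ultimately show "kron A (0\<^sub>m n n) $$ (i, j) = 0\<^sub>m (m * n) (m * n) $$ (i, j)" by (auto simp: kron_def)
qed (auto simp: kron_def)

lemma kron_add_left: "X \<in> carrier_mat m m \<Longrightarrow> Y \<in> carrier_mat m m \<Longrightarrow> B \<in> carrier_mat n n \<Longrightarrow>
  kron (X + Y) B = kron X B + kron Y B"
  by (intro eq_matI) (auto simp: kron_def less_mult_imp_div_less ring_distribs)

lemma kron_add_right:
  assumes "A \<in> carrier_mat m m" "X \<in> carrier_mat n n" "Y \<in> carrier_mat n n"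
  shows "kron A (X + Y) = kron A X + kron A Y"
proof (intro eq_matI)
  fix i j assume "i < dim_row (kron A X + kron A Y)" "j < dim_col (kron A X + kron A Y)"
  moreover from this have "n > 0" using assms by (cases n) (auto simp: kron_def)
  ultimately show "kron A (X + Y) $$ (i, j) = (kron A X + kron A Y) $$ (i, j)"
    using assms by (auto simp: kron_def ring_distribs)
qed (use assms in \<open>auto simp: kron_def\<close>)

lemma kron_smult_left: "X \<in> carrier_mat m m \<Longrightarrow> B \<in> carrier_mat n n \<Longrightarrow>
  kron (c \<cdot>\<^sub>m X) B = c \<cdot>\<^sub>m kron X B"
  by (intro eq_matI) (auto simp: kron_def less_mult_imp_div_less)

lemma kron_smult_right:
  assumes "A \<in> carrier_mat m m" "X \<in> carrier_mat n n"
  shows "kron A (c \<cdot>\<^sub>m X) = c \<cdot>\<^sub>m kron A X"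
proof (intro eq_matI)
  fix i j assume "i < dim_row (c \<cdot>\<^sub>m kron A X)" "j < dim_col (c \<cdot>\<^sub>m kron A X)"
  moreover from this have "n > 0" using assms by (cases n) (auto simp: kron_def)
  ultimately show "kron A (c \<cdot>\<^sub>m X) $$ (i, j) = (c \<cdot>\<^sub>m kron A X) $$ (i, j)"
    using assms by (auto simp: kron_def)
qed (use assms in \<open>auto simp: kron_def\<close>)

lemma sum_lessThan_add_split: "(\<Sum>a < k1 + (k2::nat). f a) = (\<Sum>a < k1. f a) + (\<Sum>a < k2. f (k1 + a))"
  by (induction k2) (simp_all add: add.assoc)

lemma sum_lessThan_mult_split: "(\<Sum>p < (m::nat) * n. f p) = (\<Sum>i < m. \<Sum>k < n. f (i * n + k))"
proof (induction m)
  case (Suc m)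
  have "(\<Sum>p < Suc m * n. f p) = (\<Sum>p < m * n + n. f p)" by (simp add: add.commute)
  also have "\<dots> = (\<Sum>p < m * n. f p) + (\<Sum>k < n. f (m * n + k))" by (rule sum_lessThan_add_split)
  finally show ?case using Suc by simp
qed simp

lemma tr_kron:
  assumes "A \<in> carrier_mat m m" "B \<in> carrier_mat n n"
  shows "tr (kron A B) = tr A * tr B"
proof -
  have "tr (kron A B) = (\<Sum>p < m * n. kron A B $$ (p, p))"
    unfolding tr_def using kron_carrier_mat[OF assms] by simp
  also have "\<dots> = (\<Sum>i < m. \<Sum>k < n. kron A B $$ (i * n + k, i * n + k))"
    by (rule sum_lessThan_mult_split)
  also have "\<dots> = (\<Sum>i < m. \<Sum>k < n. A $$ (i, i) * B $$ (k, k))"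
    by (intro sum.cong refl) (simp add: index_kron_block[OF assms])
  also have "\<dots> = tr A * tr B" unfolding tr_def using assms by (simp add: sum_product)
  finally show ?thesis .
qed

lemma tensor_list_carrier_mat:
  "set xs \<subseteq> carrier_mat d d \<Longrightarrow> tensor_list xs \<in> carrier_mat (d ^ length xs) (d ^ length xs)"
  by (induction xs) (auto intro: kron_carrier_mat)

lemma unit_op_carrier_mat: "unit_op m i j \<in> carrier_mat m m"
  unfolding unit_op_def by auto

lemma mat_unit_op_expansion:
  assumes "A \<in> carrier_mat m m"
  shows "A = mat m m (\<lambda>(p, q). \<Sum>x \<in> {..<m} \<times> {..<m}. A $$ x * unit_op m (fst x) (snd x) $$ (p, q))"
proof (rule eq_matI)
  fix p q assume "p < dim_row (mat m m (\<lambda>(p, q). \<Sum>x \<in> {..<m} \<times> {..<m}. A $$ x * unit_op m (fst x) (snd x) $$ (p, q)))"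
    "q < dim_col (mat m m (\<lambda>(p, q). \<Sum>x \<in> {..<m} \<times> {..<m}. A $$ x * unit_op m (fst x) (snd x) $$ (p, q)))"
  then have pq: "p < m" "q < m" by auto
  have "(\<Sum>x \<in> {..<m} \<times> {..<m}. A $$ x * unit_op m (fst x) (snd x) $$ (p, q)) =
        (\<Sum>x \<in> {..<m} \<times> {..<m}. if x = (p, q) then A $$ (p, q) else 0)"
    unfolding unit_op_def using pq by (intro sum.cong) auto
  also have "\<dots> = A $$ (p, q)" using pq by simp
  finally show "A $$ (p, q) = mat m m (\<lambda>(p, q). \<Sum>x \<in> {..<m} \<times> {..<m}. A $$ x * unit_op m (fst x) (snd x) $$ (p, q)) $$ (p, q)"
    using pq by simp
qed (use assms in auto)

lemma linear_op_map_index_expansion: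
  assumes "linear_op_map m \<Phi>" "A \<in> carrier_mat m m" "p < m" "q < m"
  shows "\<Phi> A $$ (p, q) = (\<Sum>i < m. \<Sum>j < m. A $$ (i, j) * \<Phi> (unit_op m i j) $$ (p, q))"
proof -
  have "\<Phi> A = mat m m (\<lambda>(p, q). \<Sum>x \<in> {..<m} \<times> {..<m}. A $$ x * \<Phi> (unit_op m (fst x) (snd x)) $$ (p, q))"
    by (subst mat_unit_op_expansion[OF assms(2)], rule linear_op_map_combination[OF assms(1)])
      (auto simp: unit_op_carrier_mat)
  then show ?thesis using assms(3,4) by (simp add: sum.cartesian_product case_prod_beta)
qed

lemma map_tensor_carrier_mat: "map_tensor m \<Phi> n \<Psi> X \<in> carrier_mat (m * n) (m * n)"
  unfolding map_tensor_def by auto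

lemma linear_op_map_map_tensor: "linear_op_map (m * n) (map_tensor m \<Phi> n \<Psi>)"
  unfolding linear_op_map_def
proof (intro conjI ballI allI)
  fix X show "map_tensor m \<Phi> n \<Psi> X \<in> carrier_mat (m * n) (m * n)" by (rule map_tensor_carrier_mat)
next
  fix X Y :: "complex mat" and a b :: complex
  assume X: "X \<in> carrier_mat (m * n) (m * n)" and Y: "Y \<in> carrier_mat (m * n) (m * n)"
  let ?M = "map_tensor m \<Phi> n \<Psi>"
  have block: "(a \<cdot>\<^sub>m X + b \<cdot>\<^sub>m Y) $$ (i * n + k, j * n + l)
      = a * X $$ (i * n + k, j * n + l) + b * Y $$ (i * n + k, j * n + l)"
    if "i < m" "j < m" "k < n" "l < n" for i j k l
    using X Y index_block_less[OF that(1,3)] index_block_less[OF that(2,4)] by auto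
  show "?M (a \<cdot>\<^sub>m X + b \<cdot>\<^sub>m Y) = a \<cdot>\<^sub>m ?M X + b \<cdot>\<^sub>m ?M Y"
  proof (rule eq_matI)
    fix p q assume "p < dim_row (a \<cdot>\<^sub>m ?M X + b \<cdot>\<^sub>m ?M Y)" "q < dim_col (a \<cdot>\<^sub>m ?M X + b \<cdot>\<^sub>m ?M Y)"
    then have pq: "p < m * n" "q < m * n" unfolding map_tensor_def by auto
    have "?M (a \<cdot>\<^sub>m X + b \<cdot>\<^sub>m Y) $$ (p, q) =
      (\<Sum>i<m. \<Sum>j<m. \<Sum>k<n. \<Sum>l<n.
       (a * X $$ (i * n + k, j * n + l) + b * Y $$ (i * n + k, j * n + l))
         * \<Phi> (unit_op m i j) $$ (p div n, q div n) * \<Psi> (unit_op n k l) $$ (p mod n, q mod n))"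
      unfolding map_tensor_def using pq by simp (intro sum.cong refl, simp add: block)
    also have "\<dots> = a * ?M X $$ (p, q) + b * ?M Y $$ (p, q)"
      unfolding map_tensor_def using pq by (simp add: sum_distrib_left sum.distrib ring_distribs mult.assoc)
    also have "\<dots> = (a \<cdot>\<^sub>m ?M X + b \<cdot>\<^sub>m ?M Y) $$ (p, q)"
      using pq carrier_matD[OF map_tensor_carrier_mat[of m \<Phi> n \<Psi> X]]
        carrier_matD[OF map_tensor_carrier_mat[of m \<Phi> n \<Psi> Y]] by simp
    finally show "?M (a \<cdot>\<^sub>m X + b \<cdot>\<^sub>m Y) $$ (p, q) = (a \<cdot>\<^sub>m ?M X + b \<cdot>\<^sub>m ?M Y) $$ (p, q)" .
  qed (auto simp: map_tensor_def)
qed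

lemma map_tensor_kron:
  assumes "linear_op_map m \<Phi>" "linear_op_map n \<Psi>" "A \<in> carrier_mat m m" "B \<in> carrier_mat n n"
  shows "map_tensor m \<Phi> n \<Psi> (kron A B) = kron (\<Phi> A) (\<Psi> B)"
proof (rule eq_matI)
  have \<Phi>A: "\<Phi> A \<in> carrier_mat m m" and \<Psi>B: "\<Psi> B \<in> carrier_mat n n"
    using assms by (simp_all add: linear_op_map_carrier)
  then show "dim_row (map_tensor m \<Phi> n \<Psi> (kron A B)) = dim_row (kron (\<Phi> A) (\<Psi> B))"
    "dim_col (map_tensor m \<Phi> n \<Psi> (kron A B)) = dim_col (kron (\<Phi> A) (\<Psi> B))"
    using map_tensor_carrier_mat kron_carrier_mat by (metis carrier_matD)+
  fix p q assume "p < dim_row (kron (\<Phi> A) (\<Psi> B))" "q < dim_col (kron (\<Phi> A) (\<Psi> B))"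
  then have pq: "p < m * n" "q < m * n" using kron_carrier_mat[OF \<Phi>A \<Psi>B] by auto
  then have "n > 0" by (cases n) auto
  then have div: "p div n < m" "q div n < m" and mod: "p mod n < n" "q mod n < n"
    using pq by (auto simp: less_mult_imp_div_less)
  have "map_tensor m \<Phi> n \<Psi> (kron A B) $$ (p, q) =
     (\<Sum>i<m. \<Sum>j<m. \<Sum>k<n. \<Sum>l<n.
       (A $$ (i, j) * \<Phi> (unit_op m i j) $$ (p div n, q div n))
       * (B $$ (k, l) * \<Psi> (unit_op n k l) $$ (p mod n, q mod n)))"
    unfolding map_tensor_def using pq
    by simp (intro sum.cong refl, simp add: index_kron_block[OF assms(3,4)] mult_ac)
  also have "\<dots> = (\<Sum>i<m. \<Sum>j<m. A $$ (i, j) * \<Phi> (unit_op m i j) $$ (p div n, q div n)) *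
                  (\<Sum>k<n. \<Sum>l<n. B $$ (k, l) * \<Psi> (unit_op n k l) $$ (p mod n, q mod n))"
    by (simp only: sum_distrib_right) (simp only: sum_distrib_left)
  also have "\<dots> = \<Phi> A $$ (p div n, q div n) * \<Psi> B $$ (p mod n, q mod n)"
    using linear_op_map_index_expansion[OF assms(1,3) div] linear_op_map_index_expansion[OF assms(2,4) mod]
    by simp
  also have "\<dots> = kron (\<Phi> A) (\<Psi> B) $$ (p, q)" using index_kron[OF \<Phi>A \<Psi>B pq] by simp
  finally show "map_tensor m \<Phi> n \<Psi> (kron A B) $$ (p, q) = kron (\<Phi> A) (\<Psi> B) $$ (p, q)" .
qed

lemma linear_op_map_map_tensor_pow: "linear_op_map (d ^ N) (map_tensor_pow d \<Phi> N)"
proof (cases N)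
  case 0
  then show ?thesis unfolding linear_op_map_def by auto
next
  case (Suc M)
  then show ?thesis using linear_op_map_map_tensor[of d "d ^ M" \<Phi> "map_tensor_pow d \<Phi> M"] by simp
qed

lemma map_tensor_pow_tensor_list:
  assumes "linear_op_map d \<Phi>" "set xs \<subseteq> carrier_mat d d"
  shows "map_tensor_pow d \<Phi> (length xs) (tensor_list xs) = tensor_list (map \<Phi> xs)"
  using assms(2)
proof (induction xs)
  case (Cons x xs)
  have "map_tensor_pow d \<Phi> (length (x # xs)) (tensor_list (x # xs))
      = map_tensor d \<Phi> (d ^ length xs) (map_tensor_pow d \<Phi> (length xs)) (kron x (tensor_list xs))"
    by simp
  also have "\<dots> = kron (\<Phi> x) (map_tensor_pow d \<Phi> (length xs) (tensor_list xs))"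
    using Cons.prems
    by (intro map_tensor_kron[OF assms(1) linear_op_map_map_tensor_pow]) (simp_all add: tensor_list_carrier_mat)
  also have "\<dots> = kron (\<Phi> x) (tensor_list (map \<Phi> xs))" using Cons by simp
  finally show ?case by simp
qed simp

lemma map_tensor_expansion:
  assumes "linear_op_map m \<Phi>" "linear_op_map n \<Psi>"
  shows "map_tensor m \<Phi> n \<Psi> X = mat (m * n) (m * n) (\<lambda>(p, q).
     \<Sum>x \<in> {..<m} \<times> {..<m} \<times> {..<n} \<times> {..<n}.
       (case x of (i, j, k, l) \<Rightarrow> X $$ (i * n + k, j * n + l))
       * (case x of (i, j, k, l) \<Rightarrow> kron (\<Phi> (unit_op m i j)) (\<Psi> (unit_op n k l))) $$ (p, q))"
    (is "_ = ?R")
proof (rule eq_matI)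
  fix p q assume "p < dim_row ?R" "q < dim_col ?R"
  then have pq: "p < m * n" "q < m * n" by auto
  have "map_tensor m \<Phi> n \<Psi> X $$ (p, q) = (\<Sum>(i, j, k, l) \<in> {..<m} \<times> {..<m} \<times> {..<n} \<times> {..<n}.
       X $$ (i * n + k, j * n + l) * \<Phi> (unit_op m i j) $$ (p div n, q div n)
         * \<Psi> (unit_op n k l) $$ (p mod n, q mod n))"
    unfolding map_tensor_def using pq by (simp add: sum.cartesian_product)
  also have "\<dots> = ?R $$ (p, q)"
    unfolding index_mat(1)[OF pq] prod.case
  proof (intro sum.cong refl)
    fix x assume "x \<in> {..<m} \<times> {..<m} \<times> {..<n} \<times> {..<n}"
    then obtain i j k l where x: "x = (i, j, k, l)" by (cases x) auto
    have "\<Phi> (unit_op m i j) \<in> carrier_mat m m" "\<Psi> (unit_op n k l) \<in> carrier_mat n n"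
      using assms by (simp_all add: linear_op_map_carrier unit_op_carrier_mat)
    from index_kron[OF this pq] show "(case x of (i, j, k, l) \<Rightarrow>
       X $$ (i * n + k, j * n + l) * \<Phi> (unit_op m i j) $$ (p div n, q div n)
         * \<Psi> (unit_op n k l) $$ (p mod n, q mod n)) =
       (case x of (i, j, k, l) \<Rightarrow> X $$ (i * n + k, j * n + l))
       * (case x of (i, j, k, l) \<Rightarrow> kron (\<Phi> (unit_op m i j)) (\<Psi> (unit_op n k l))) $$ (p, q)"
      unfolding x by (simp add: mult.assoc)
  qed
  finally show "map_tensor m \<Phi> n \<Psi> X $$ (p, q) = ?R $$ (p, q)" .
qed (auto simp: map_tensor_def)

section \<open>Complex linear span of a set of square matrices\<close>

inductive_set cspan :: "nat \<Rightarrow> complex mat set \<Rightarrow> complex mat set" for n S where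
  zero: "0\<^sub>m n n \<in> cspan n S"
| gen: "s \<in> S \<Longrightarrow> s \<in> carrier_mat n n \<Longrightarrow> s \<in> cspan n S"
| add: "X \<in> cspan n S \<Longrightarrow> Y \<in> cspan n S \<Longrightarrow> X + Y \<in> cspan n S"
| smult: "X \<in> cspan n S \<Longrightarrow> c \<cdot>\<^sub>m X \<in> cspan n S"

lemma cspan_carrier: "X \<in> cspan n S \<Longrightarrow> X \<in> carrier_mat n n"
  by (induction rule: cspan.induct) auto

lemma cspan_combination:
  assumes "finite I" "\<And>i. i \<in> I \<Longrightarrow> X i \<in> cspan n S"
  shows "mat n n (\<lambda>(p, q). \<Sum>i\<in>I. c i * X i $$ (p, q)) \<in> cspan n S"
  using assms
proof (induction I rule: finite_induct)
  case empty
  have "mat n n (\<lambda>_. 0) = (0\<^sub>m n n :: complex mat)" by (intro eq_matI) auto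
  then show ?case by (simp add: cspan.zero)
next
  case (insert x I)
  have X: "X x \<in> carrier_mat n n" using insert.prems cspan_carrier by blast
  have IH: "mat n n (\<lambda>(p, q). \<Sum>i\<in>I. c i * X i $$ (p, q)) \<in> cspan n S"
    by (rule insert.IH) (use insert.prems in auto)
  show ?case unfolding mat_combination_insert[where X = X, OF insert(1,2) X]
    by (intro cspan.add cspan.smult IH) (use insert.prems in auto)
qed

lemma cspan_linear_image:
  assumes "linear_op_map n \<Phi>" "X \<in> cspan n S"
    and "\<And>s. s \<in> S \<Longrightarrow> s \<in> carrier_mat n n \<Longrightarrow> \<Phi> s \<in> cspan n T"
  shows "\<Phi> X \<in> cspan n T"
  using assms(2)
proof (induction rule: cspan.induct)
  case zero
  then show ?case using linear_op_map_zero[OF assms(1)] cspan.zero by simp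
next
  case (gen s)
  then show ?case using assms(3) by simp
next
  case (add X Y)
  then show ?case using linear_op_map_add[OF assms(1) cspan_carrier cspan_carrier] cspan.add by metis
next
  case (smult X c)
  then show ?case using linear_op_map_smult[OF assms(1) cspan_carrier] cspan.smult by metis
qed

lemma cspan_kron:
  assumes "A \<in> cspan m S" "B \<in> cspan n S'"
    and "\<And>s t. s \<in> S \<Longrightarrow> s \<in> carrier_mat m m \<Longrightarrow> t \<in> S' \<Longrightarrow> t \<in> carrier_mat n n \<Longrightarrow> kron s t \<in> T"
  shows "kron A B \<in> cspan (m * n) T"
  using assms(1)
proof (induction rule: cspan.induct)
  case zero
  then show ?case using kron_zero_left[OF cspan_carrier[OF assms(2)]] cspan.zero by metis
next
  case (gen s)
  from assms(2) show ?case
  proof (induction rule: cspan.induct)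
    case zero
    then show ?case using kron_zero_right[OF gen(2)] cspan.zero by metis
  next
    case (gen t)
    then show ?case using \<open>s \<in> S\<close> \<open>s \<in> carrier_mat m m\<close> assms(3)
      by (intro cspan.gen) (auto intro: kron_carrier_mat)
  next
    case (add X Y)
    then show ?case using kron_add_right[OF \<open>s \<in> carrier_mat m m\<close> cspan_carrier cspan_carrier] cspan.add by metis
  next
    case (smult X c)
    then show ?case using kron_smult_right[OF \<open>s \<in> carrier_mat m m\<close> cspan_carrier] cspan.smult by metis
  qed
next
  case (add X Y)
  then show ?case
    using kron_add_left[OF cspan_carrier cspan_carrier cspan_carrier[OF assms(2)]] cspan.add by metis
next
  case (smult X c)
  then show ?case using kron_smult_left[OF cspan_carrier cspan_carrier[OF assms(2)]] cspan.smult by metis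
qed

lemma cspan_imp_combination:
  assumes "X \<in> cspan n S"
  shows "\<exists>(k::nat) c \<sigma>. (\<forall>a<k. \<sigma> a \<in> S) \<and> X = mat n n (\<lambda>(p, q). \<Sum>a<k. c a * \<sigma> a $$ (p, q))"
  using assms
proof (induction rule: cspan.induct)
  case zero
  show ?case
    by (intro exI[of _ "0::nat"] exI[of _ "\<lambda>_. 0"] exI[of _ "\<lambda>_. 0\<^sub>m n n"] conjI) (auto intro!: eq_matI)
next
  case (gen s)
  then have "s = mat n n (\<lambda>(p, q). \<Sum>a<1::nat. 1 * s $$ (p, q))" by (intro eq_matI) auto
  with gen show ?case by (intro exI[of _ 1] exI[of _ "\<lambda>_. 1"] exI[of _ "\<lambda>_. s"]) auto
next
  case (add X Y)
  then obtain k1 k2 :: nat and c1 \<sigma>1 c2 \<sigma>2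
    where \<sigma>1: "\<forall>a<k1. \<sigma>1 a \<in> S" and X: "X = mat n n (\<lambda>(p, q). \<Sum>a<k1. c1 a * \<sigma>1 a $$ (p, q))"
      and \<sigma>2: "\<forall>a<k2. \<sigma>2 a \<in> S" and Y: "Y = mat n n (\<lambda>(p, q). \<Sum>a<k2. c2 a * \<sigma>2 a $$ (p, q))"
    by blast
  define c where "c a = (if a < k1 then c1 a else c2 (a - k1))" for a
  define \<sigma> where "\<sigma> a = (if a < k1 then \<sigma>1 a else \<sigma>2 (a - k1))" for a
  have "(\<Sum>a<k1 + k2. c a * \<sigma> a $$ (p, q))
      = (\<Sum>a<k1. c1 a * \<sigma>1 a $$ (p, q)) + (\<Sum>a<k2. c2 a * \<sigma>2 a $$ (p, q))" for p q
    unfolding sum_lessThan_add_split c_def \<sigma>_def by simp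
  then have "X + Y = mat n n (\<lambda>(p, q). \<Sum>a<k1 + k2. c a * \<sigma> a $$ (p, q))"
    unfolding X Y by (intro eq_matI) auto
  moreover have "\<forall>a<k1 + k2. \<sigma> a \<in> S" using \<sigma>1 \<sigma>2 unfolding \<sigma>_def by auto
  ultimately show ?case by (intro exI[of _ "k1 + k2"] exI[of _ c] exI[of _ \<sigma>] conjI)
next
  case (smult X c0)
  then obtain k :: nat and c \<sigma>
    where \<sigma>: "\<forall>a<k. \<sigma> a \<in> S" and X: "X = mat n n (\<lambda>(p, q). \<Sum>a<k. c a * \<sigma> a $$ (p, q))"
    by blast
  have "c0 \<cdot>\<^sub>m X = mat n n (\<lambda>(p, q). \<Sum>a<k. (c0 * c a) * \<sigma> a $$ (p, q))"
    unfolding X by (intro eq_matI) (auto simp: sum_distrib_left mult.assoc)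
  with \<sigma> show ?case by (intro exI[of _ k] exI[of _ "\<lambda>a. c0 * c a"] exI[of _ \<sigma>] conjI)
qed

section \<open>Density operators\<close>

lemma psd_carrier_mat: "psd n A \<Longrightarrow> A \<in> carrier_mat n n"
  unfolding psd_def by blast

lemma Dens_carrier_mat: "Dens d \<subseteq> carrier_mat d d"
  unfolding Dens_def density_def using psd_carrier_mat by blast

definition two_point :: "nat \<Rightarrow> nat \<Rightarrow> complex \<Rightarrow> complex \<Rightarrow> nat \<Rightarrow> complex" where
  "two_point p q \<alpha> \<beta> t = (if t = p then \<alpha> else 0) + (if t = q then \<beta> else 0)"

lemma sum_mult_two_point:
  assumes "p < n" "q < n"
  shows "(\<Sum>j<n. f j * two_point p q \<alpha> \<beta> j) = f p * \<alpha> + f q * \<beta>"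
proof -
  have "(\<Sum>j<n. f j * two_point p q \<alpha> \<beta> j)
      = (\<Sum>j<n. (if j = p then f j * \<alpha> else 0) + (if j = q then f j * \<beta> else 0))"
    unfolding two_point_def by (intro sum.cong) (auto simp: distrib_left)
  also have "\<dots> = f p * \<alpha> + f q * \<beta>" using assms by (auto simp: sum.distrib algebra_simps)
  finally show ?thesis .
qed

lemma quadratic_form_two_point:
  assumes "A \<in> carrier_mat n n" "p < n" "q < n"
  shows "(\<Sum>i<n. \<Sum>j<n. cnj (vec n (two_point p q \<alpha> \<beta>) $ i) * A $$ (i, j) * vec n (two_point p q \<alpha> \<beta>) $ j)
    = cnj \<alpha> * (A $$ (p, p) * \<alpha> + A $$ (p, q) * \<beta>) + cnj \<beta> * (A $$ (q, p) * \<alpha> + A $$ (q, q) * \<beta>)"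
proof -
  have "(\<Sum>i<n. \<Sum>j<n. cnj (vec n (two_point p q \<alpha> \<beta>) $ i) * A $$ (i, j) * vec n (two_point p q \<alpha> \<beta>) $ j)
     = (\<Sum>i<n. cnj (two_point p q \<alpha> \<beta> i) * (\<Sum>j<n. A $$ (i, j) * two_point p q \<alpha> \<beta> j))"
    by (intro sum.cong refl) (simp add: sum_distrib_left mult.assoc)
  also have "\<dots> = (\<Sum>i<n. (A $$ (i, p) * \<alpha> + A $$ (i, q) * \<beta>) * cnj (two_point p q \<alpha> \<beta> i))"
    using assms by (intro sum.cong refl) (simp add: sum_mult_two_point mult.commute)
  also have "\<dots> = (\<Sum>i<n. (A $$ (i, p) * \<alpha> + A $$ (i, q) * \<beta>) * two_point p q (cnj \<alpha>) (cnj \<beta>) i)"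
    unfolding two_point_def by (intro sum.cong refl) auto
  also have "\<dots> = (A $$ (p, p) * \<alpha> + A $$ (p, q) * \<beta>) * cnj \<alpha> + (A $$ (q, p) * \<alpha> + A $$ (q, q) * \<beta>) * cnj \<beta>"
    by (rule sum_mult_two_point[OF assms(2,3)])
  finally show ?thesis by (simp add: mult.commute)
qed

text \<open>The quadratic form of a \<open>psd\<close> matrix is real; testing it on vectors supported on \<open>{p, q}\<close>
  with coefficients \<open>(1,0)\<close>, \<open>(0,1)\<close>, \<open>(1,1)\<close> and \<open>(1,\<i>)\<close> forces \<open>A\<^sub>q\<^sub>p = cnj A\<^sub>p\<^sub>q\<close>.\<close>

lemma psd_conj_sym:
  assumes "psd n A" "p < n" "q < n"
  shows "A $$ (q, p) = cnj (A $$ (p, q))"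
proof -
  have Q: "Im (cnj \<alpha> * (A $$ (p, p) * \<alpha> + A $$ (p, q) * \<beta>) + cnj \<beta> * (A $$ (q, p) * \<alpha> + A $$ (q, q) * \<beta>)) = 0"
    for \<alpha> \<beta>
  proof -
    have "Im (\<Sum>i<n. \<Sum>j<n. cnj (vec n (two_point p q \<alpha> \<beta>) $ i) * A $$ (i, j) * vec n (two_point p q \<alpha> \<beta>) $ j) = 0"
      using assms(1) unfolding psd_def Let_def by (meson vec_carrier)
    then show ?thesis
      by (simp only: quadratic_form_two_point[OF psd_carrier_mat[OF assms(1)] assms(2,3)])
  qed
  have "Im (A $$ (p, p)) = 0" "Im (A $$ (q, q)) = 0"
    using Q[of 1 0] Q[of 0 1] by simp_all
  then have "Im (A $$ (p, q)) + Im (A $$ (q, p)) = 0" "Re (A $$ (p, q)) - Re (A $$ (q, p)) = 0"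
    using Q[of 1 1] Q[of 1 \<i>] by simp_all
  then show ?thesis by (intro complex_eqI) auto
qed

definition outer_mat :: "nat \<Rightarrow> real \<Rightarrow> (nat \<Rightarrow> complex) \<Rightarrow> complex mat" where
  "outer_mat n r v = mat n n (\<lambda>(p, q). complex_of_real r * (v p * cnj (v q)))"

lemma psd_outer_mat:
  assumes "r \<ge> 0"
  shows "psd n (outer_mat n r v)"
  unfolding psd_def Let_def
proof (intro conjI ballI)
  show "outer_mat n r v \<in> carrier_mat n n" unfolding outer_mat_def by simp
  fix w :: "complex vec" assume "w \<in> carrier_vec n"
  define s where "s = (\<Sum>i<n. cnj (w $ i) * v i)"
  have "(\<Sum>i<n. \<Sum>j<n. cnj (w $ i) * outer_mat n r v $$ (i, j) * w $ j) =
        (\<Sum>i<n. \<Sum>j<n. complex_of_real r * ((cnj (w $ i) * v i) * (cnj (v j) * w $ j)))"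
    unfolding outer_mat_def by (intro sum.cong refl) (simp add: mult_ac)
  also have "\<dots> = complex_of_real r * (\<Sum>i<n. \<Sum>j<n. (cnj (w $ i) * v i) * (cnj (v j) * w $ j))"
    by (simp add: sum_distrib_left)
  also have "\<dots> = complex_of_real r * (s * cnj s)"
    unfolding s_def by (simp add: sum_product mult.commute)
  also have "\<dots> = complex_of_real (r * (cmod s)^2)"
    using complex_norm_square[of s] by simp
  finally have form: "(\<Sum>i<n. \<Sum>j<n. cnj (w $ i) * outer_mat n r v $$ (i, j) * w $ j)
      = complex_of_real (r * (cmod s)^2)" .
  show "Im (\<Sum>i<n. \<Sum>j<n. cnj (w $ i) * outer_mat n r v $$ (i, j) * w $ j) = 0"
    unfolding form by simp
  show "Re (\<Sum>i<n. \<Sum>j<n. cnj (w $ i) * outer_mat n r v $$ (i, j) * w $ j) \<ge> 0"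
    unfolding form using assms by simp
qed

lemma tr_outer_mat:
  assumes "p < n" "q < n"
  shows "tr (outer_mat n r (two_point p q \<alpha> \<beta>))
    = complex_of_real r * (cnj (two_point p q \<alpha> \<beta> p) * \<alpha> + cnj (two_point p q \<alpha> \<beta> q) * \<beta>)"
proof -
  have "tr (outer_mat n r (two_point p q \<alpha> \<beta>))
      = (\<Sum>t<n. (complex_of_real r * cnj (two_point p q \<alpha> \<beta> t)) * two_point p q \<alpha> \<beta> t)"
    unfolding tr_def outer_mat_def by (intro sum.cong) (auto simp: mult_ac)
  also have "\<dots> = complex_of_real r * cnj (two_point p q \<alpha> \<beta> p) * \<alpha>
      + complex_of_real r * cnj (two_point p q \<alpha> \<beta> q) * \<beta>"
    by (rule sum_mult_two_point[OF assms])
  finally show ?thesis by (simp add: algebra_simps)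
qed

lemma outer_mat_basis_Dens: "i < d \<Longrightarrow> outer_mat d 1 (two_point i i 1 0) \<in> Dens d"
  unfolding Dens_def density_def using psd_outer_mat[of 1 d] tr_outer_mat[of i d i 1 1 0]
  by (simp add: two_point_def)

lemma outer_mat_superposition_Dens:
  assumes "i < d" "j < d" "i \<noteq> j" "cnj \<beta> * \<beta> = 1"
  shows "outer_mat d (1/2) (two_point i j 1 \<beta>) \<in> Dens d"
  unfolding Dens_def density_def using assms psd_outer_mat[of "1/2" d] tr_outer_mat[of i d j "1/2" 1 \<beta>]
  by (simp add: two_point_def)

lemma unit_op_diag: "i < d \<Longrightarrow> unit_op d i i = outer_mat d 1 (two_point i i 1 0)"
  unfolding unit_op_def outer_mat_def two_point_def by (intro eq_matI) auto

text \<open>Polarization: \<open>|i\<rangle>\<langle>j|\<close> as a combination of the pure states \<open>|i\<rangle>\<close>, \<open>|j\<rangle>\<close>,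
  \<open>(|i\<rangle> + |j\<rangle>)/\<surd>2\<close> and \<open>(|i\<rangle> + \<i>|j\<rangle>)/\<surd>2\<close>.\<close>

lemma unit_op_off_diag:
  assumes "i < d" "j < d" "i \<noteq> j"
  shows "unit_op d i j = outer_mat d (1/2) (two_point i j 1 1) + \<i> \<cdot>\<^sub>m outer_mat d (1/2) (two_point i j 1 \<i>)
     + (- (1 + \<i>) / 2) \<cdot>\<^sub>m outer_mat d 1 (two_point i i 1 0)
     + (- (1 + \<i>) / 2) \<cdot>\<^sub>m outer_mat d 1 (two_point j j 1 0)"
    (is "_ = ?R")
proof (rule eq_matI)
  fix p q assume "p < dim_row ?R" "q < dim_col ?R"
  then have "p < d" "q < d" by (simp_all add: outer_mat_def)
  with assms show "unit_op d i j $$ (p, q) = ?R $$ (p, q)"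
    by (cases "p = i"; cases "p = j"; cases "q = i"; cases "q = j")
      (simp_all add: unit_op_def outer_mat_def two_point_def field_simps)
qed (auto simp: unit_op_def outer_mat_def)

lemma unit_op_in_cspan_Dens:
  assumes "i < d" "j < d"
  shows "unit_op d i j \<in> cspan d (Dens d)"
proof -
  have Dens: "X \<in> Dens d \<Longrightarrow> X \<in> cspan d (Dens d)" for X
    using Dens_carrier_mat by (auto intro: cspan.gen)
  show ?thesis
  proof (cases "i = j")
    case True
    then show ?thesis using assms unit_op_diag outer_mat_basis_Dens Dens by metis
  next
    case False
    show ?thesis unfolding unit_op_off_diag[OF assms False]
      by (intro cspan.add cspan.smult Dens outer_mat_superposition_Dens outer_mat_basis_Dens assms False)
        simp_all
  qed
qed

lemma carrier_mat_in_cspan_Dens: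
  assumes "Y \<in> carrier_mat d d"
  shows "Y \<in> cspan d (Dens d)"
proof -
  have "mat d d (\<lambda>(p, q). \<Sum>x\<in>{..<d}\<times>{..<d}. Y $$ x * unit_op d (fst x) (snd x) $$ (p, q)) \<in> cspan d (Dens d)"
    by (rule cspan_combination) (auto intro: unit_op_in_cspan_Dens)
  then show ?thesis using mat_unit_op_expansion[OF assms] by simp
qed

definition hermitian_mat :: "nat \<Rightarrow> complex mat \<Rightarrow> bool" where
  "hermitian_mat n A \<longleftrightarrow> A \<in> carrier_mat n n \<and> (\<forall>p<n. \<forall>q<n. A $$ (q, p) = cnj (A $$ (p, q)))"

lemma Dens_hermitian_mat: "\<rho> \<in> Dens n \<Longrightarrow> hermitian_mat n \<rho>"
  unfolding Dens_def density_def hermitian_mat_def using psd_carrier_mat psd_conj_sym by blast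

lemma hermitian_mat_kron:
  assumes "hermitian_mat m A" "hermitian_mat n B"
  shows "hermitian_mat (m * n) (kron A B)"
  unfolding hermitian_mat_def
proof (intro conjI allI impI)
  have A: "A \<in> carrier_mat m m" and B: "B \<in> carrier_mat n n"
    using assms unfolding hermitian_mat_def by auto
  then show "kron A B \<in> carrier_mat (m * n) (m * n)" by (rule kron_carrier_mat)
  fix p q assume pq: "p < m * n" "q < m * n"
  then have "n > 0" by (cases n) auto
  then have "p div n < m" "q div n < m" "p mod n < n" "q mod n < n"
    using pq by (auto simp: less_mult_imp_div_less)
  with assms have "A $$ (q div n, p div n) = cnj (A $$ (p div n, q div n))"
    and "B $$ (q mod n, p mod n) = cnj (B $$ (p mod n, q mod n))"
    unfolding hermitian_mat_def by blast+
  then show "kron A B $$ (q, p) = cnj (kron A B $$ (p, q))"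
    using index_kron[OF A B pq] index_kron[OF A B pq(2,1)] by simp
qed

lemma tensor_list_hermitian_tr:
  assumes "set xs \<subseteq> Dens d"
  shows "hermitian_mat (d ^ length xs) (tensor_list xs) \<and> tr (tensor_list xs) = 1"
  using assms
proof (induction xs)
  case Nil
  then show ?case unfolding hermitian_mat_def tr_def by auto
next
  case (Cons x xs)
  then have x: "hermitian_mat d x" "tr x = 1" and xs: "hermitian_mat (d ^ length xs) (tensor_list xs)"
      "tr (tensor_list xs) = 1"
    using Dens_hermitian_mat unfolding Dens_def density_def by auto
  then have "tr (kron x (tensor_list xs)) = 1"
    using tr_kron[of x d "tensor_list xs" "d ^ length xs"] unfolding hermitian_mat_def by simp
  then show ?case using hermitian_mat_kron[OF x(1) xs(1)] by simp
qed

section \<open>Affine combinations\<close>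

lemma linear_op_map_fixes_Aff:
  assumes "linear_op_map n \<Phi>" "S \<subseteq> carrier_mat n n" "\<And>\<sigma>. \<sigma> \<in> S \<Longrightarrow> \<Phi> \<sigma> = \<sigma>"
    and "\<rho> \<in> Aff n S"
  shows "\<Phi> \<rho> = \<rho>"
proof -
  obtain k :: nat and t \<sigma> where \<sigma>: "\<forall>a<k. \<sigma> a \<in> S"
    and \<rho>: "\<rho> = mat n n (\<lambda>(p, q). \<Sum>a<k. complex_of_real (t a) * \<sigma> a $$ (p, q))"
    using assms(4) unfolding Aff_def by blast
  have "\<Phi> \<rho> = mat n n (\<lambda>(p, q). \<Sum>a<k. complex_of_real (t a) * \<Phi> (\<sigma> a) $$ (p, q))"
    unfolding \<rho> by (rule linear_op_map_combination[OF assms(1)]) (use \<sigma> assms(2) in auto)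
  also have "\<dots> = \<rho>" unfolding \<rho> using \<sigma> assms(3) by (auto intro!: eq_matI sum.cong)
  finally show ?thesis .
qed

lemma hermitian_combination_Re:
  assumes "hermitian_mat n \<rho>" "\<rho> = mat n n (\<lambda>(p, q). \<Sum>a<k. c a * \<sigma> a $$ (p, q))"
    and "\<And>a. a < k \<Longrightarrow> hermitian_mat n (\<sigma> a)"
  shows "\<rho> = mat n n (\<lambda>(p, q). \<Sum>a<k. complex_of_real (Re (c a)) * \<sigma> a $$ (p, q))"
proof (rule eq_matI)
  fix p q assume "p < dim_row (mat n n (\<lambda>(p, q). \<Sum>a<k. complex_of_real (Re (c a)) * \<sigma> a $$ (p, q)))"
    "q < dim_col (mat n n (\<lambda>(p, q). \<Sum>a<k. complex_of_real (Re (c a)) * \<sigma> a $$ (p, q)))"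
  then have pq: "p < n" "q < n" by auto
  have entry: "\<rho> $$ (i, j) = (\<Sum>a<k. c a * \<sigma> a $$ (i, j))" if "i < n" "j < n" for i j
    using assms(2) that by simp
  have "\<rho> $$ (p, q) = cnj (\<rho> $$ (q, p))" using assms(1) pq unfolding hermitian_mat_def by blast
  also have "\<dots> = (\<Sum>a<k. cnj (c a) * cnj (\<sigma> a $$ (q, p)))" using entry[OF pq(2,1)] by simp
  also have "\<dots> = (\<Sum>a<k. cnj (c a) * \<sigma> a $$ (p, q))"
  proof (intro sum.cong refl)
    fix a assume "a \<in> {..<k}"
    then have "\<sigma> a $$ (p, q) = cnj (\<sigma> a $$ (q, p))"
      using assms(3) pq unfolding hermitian_mat_def by blast
    then show "cnj (c a) * cnj (\<sigma> a $$ (q, p)) = cnj (c a) * \<sigma> a $$ (p, q)" by simp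
  qed
  finally have conj: "\<rho> $$ (p, q) = (\<Sum>a<k. cnj (c a) * \<sigma> a $$ (p, q))" .
  have "(\<Sum>a<k. c a * \<sigma> a $$ (p, q)) + (\<Sum>a<k. cnj (c a) * \<sigma> a $$ (p, q))
     = 2 * (\<Sum>a<k. complex_of_real (Re (c a)) * \<sigma> a $$ (p, q))"
    unfolding sum.distrib[symmetric] sum_distrib_left
    by (intro sum.cong refl) (simp add: ring_distribs[symmetric] complex_add_cnj)
  then have "\<rho> $$ (p, q) = (\<Sum>a<k. complex_of_real (Re (c a)) * \<sigma> a $$ (p, q))"
    unfolding entry[OF pq, symmetric] conj[symmetric] by simp
  then show "\<rho> $$ (p, q) = mat n n (\<lambda>(p, q). \<Sum>a<k. complex_of_real (Re (c a)) * \<sigma> a $$ (p, q)) $$ (p, q)"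
    using pq by simp
qed (use assms(2) in auto)

lemma tr_combination:
  assumes "\<And>a. a < k \<Longrightarrow> \<sigma> a \<in> carrier_mat n n"
  shows "tr (mat n n (\<lambda>(p, q). \<Sum>a<k. c a * \<sigma> a $$ (p, q))) = (\<Sum>a<k. c a * tr (\<sigma> a))"
proof -
  have "tr (mat n n (\<lambda>(p, q). \<Sum>a<k. c a * \<sigma> a $$ (p, q))) = (\<Sum>p<n. \<Sum>a<k. c a * \<sigma> a $$ (p, p))"
    unfolding tr_def by simp
  also have "\<dots> = (\<Sum>a<k. c a * tr (\<sigma> a))"
    unfolding tr_def using assms by (subst sum.swap) (auto simp: sum_distrib_left intro!: sum.cong)
  finally show ?thesis .
qed

lemma Aff_if_density_in_cspan:
  assumes "density n \<rho>" "\<rho> \<in> cspan n S" "\<And>\<sigma>. \<sigma> \<in> S \<Longrightarrow> hermitian_mat n \<sigma> \<and> tr \<sigma> = 1"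
  shows "\<rho> \<in> Aff n S"
proof -
  obtain k :: nat and c \<sigma> where \<sigma>: "\<forall>a<k. \<sigma> a \<in> S"
    and \<rho>: "\<rho> = mat n n (\<lambda>(p, q). \<Sum>a<k. c a * \<sigma> a $$ (p, q))"
    using cspan_imp_combination[OF assms(2)] by blast
  have herm: "\<And>a. a < k \<Longrightarrow> hermitian_mat n (\<sigma> a)" and tr1: "\<And>a. a < k \<Longrightarrow> tr (\<sigma> a) = 1"
    using \<sigma> assms(3) by auto
  have carrier: "\<And>a. a < k \<Longrightarrow> \<sigma> a \<in> carrier_mat n n"
    using herm unfolding hermitian_mat_def by blast
  have "\<rho> \<in> Dens n" using assms(1) unfolding Dens_def by simp
  from hermitian_combination_Re[OF Dens_hermitian_mat[OF this] \<rho> herm]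
  have real: "\<rho> = mat n n (\<lambda>(p, q). \<Sum>a<k. complex_of_real (Re (c a)) * \<sigma> a $$ (p, q))" .
  have "complex_of_real (\<Sum>a<k. Re (c a)) = (\<Sum>a<k. complex_of_real (Re (c a)) * tr (\<sigma> a))"
    by (simp add: tr1)
  also have "\<dots> = tr \<rho>" unfolding real by (rule tr_combination[symmetric, OF carrier])
  finally have "(\<Sum>a<k. Re (c a)) = 1"
    using assms(1) of_real_eq_1_iff unfolding density_def by metis
  with assms(1) \<sigma> real show ?thesis unfolding Aff_def by blast
qed

section \<open>Fixed points of tensor powers\<close>

lemma linear_op_map_in_cspan_if_Dens:
  assumes "linear_op_map d \<Phi>" "\<And>\<rho>. \<rho> \<in> Dens d \<Longrightarrow> \<Phi> \<rho> \<in> S" "S \<subseteq> carrier_mat d d"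
    and "Y \<in> carrier_mat d d"
  shows "\<Phi> Y \<in> cspan d S"
  using assms(1) carrier_mat_in_cspan_Dens[OF assms(4)]
  by (rule cspan_linear_image) (use assms(2,3) in \<open>auto intro: cspan.gen\<close>)

lemma map_tensor_pow_in_cspan:
  assumes "linear_op_map d \<Phi>" "\<And>Y. Y \<in> carrier_mat d d \<Longrightarrow> \<Phi> Y \<in> cspan d S"
  shows "X \<in> carrier_mat (d ^ N) (d ^ N) \<Longrightarrow> map_tensor_pow d \<Phi> N X \<in> cspan (d ^ N) (tensor_pow_set S N)"
proof (induction N arbitrary: X)
  case 0
  then have X: "X = X $$ (0, 0) \<cdot>\<^sub>m 1\<^sub>m 1" by (intro eq_matI) auto
  have "1\<^sub>m 1 \<in> tensor_pow_set S 0" unfolding tensor_pow_set_def by force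
  then have "X $$ (0, 0) \<cdot>\<^sub>m 1\<^sub>m 1 \<in> cspan 1 (tensor_pow_set S 0)" by (intro cspan.smult cspan.gen) auto
  then show ?case using X by simp
next
  case (Suc N)
  let ?n = "d ^ N" and ?\<Psi> = "map_tensor_pow d \<Phi> N"
  have kron_mem: "kron s t \<in> tensor_pow_set S (Suc N)" if s: "s \<in> S" and t: "t \<in> tensor_pow_set S N" for s t
  proof -
    obtain xs where "t = tensor_list xs" "length xs = N" "set xs \<subseteq> S"
      using t unfolding tensor_pow_set_def by blast
    then have "kron s t = tensor_list (s # xs)" "length (s # xs) = Suc N" "set (s # xs) \<subseteq> S"
      using s by auto
    then show ?thesis unfolding tensor_pow_set_def by blast
  qed
  have "map_tensor d \<Phi> ?n ?\<Psi> X \<in> cspan (d * ?n) (tensor_pow_set S (Suc N))"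
    unfolding map_tensor_expansion[OF assms(1) linear_op_map_map_tensor_pow]
  proof (rule cspan_combination)
    fix x assume "x \<in> {..<d} \<times> {..<d} \<times> {..<?n} \<times> {..<?n}"
    then obtain i j k l where x: "x = (i, j, k, l)" by (cases x) auto
    have "kron (\<Phi> (unit_op d i j)) (?\<Psi> (unit_op ?n k l)) \<in> cspan (d * ?n) (tensor_pow_set S (Suc N))"
      by (rule cspan_kron[OF assms(2) Suc.IH]) (auto simp: unit_op_carrier_mat kron_mem)
    then show "(case x of (i, j, k, l) \<Rightarrow> kron (\<Phi> (unit_op d i j)) (?\<Psi> (unit_op ?n k l)))
        \<in> cspan (d * ?n) (tensor_pow_set S (Suc N))"
      unfolding x by simp
  qed simp
  then show ?case by simp
qed

lemma tensor_pow_set_hermitian_tr: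
  assumes "S \<subseteq> Dens d" "\<sigma> \<in> tensor_pow_set S N"
  shows "hermitian_mat (d ^ N) \<sigma>" "tr \<sigma> = 1"
  using assms tensor_list_hermitian_tr unfolding tensor_pow_set_def by fastforce+

lemma map_tensor_pow_fixes_tensor_pow_set:
  assumes "linear_op_map d \<Phi>" "S \<subseteq> carrier_mat d d" "\<And>\<sigma>. \<sigma> \<in> S \<Longrightarrow> \<Phi> \<sigma> = \<sigma>"
    and "\<sigma> \<in> tensor_pow_set S N"
  shows "map_tensor_pow d \<Phi> N \<sigma> = \<sigma>"
proof -
  obtain xs where xs: "\<sigma> = tensor_list xs" "length xs = N" "set xs \<subseteq> S"
    using assms(4) unfolding tensor_pow_set_def by blast
  have "map \<Phi> xs = xs" using xs(3) assms(3) by (induction xs) auto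
  then show ?thesis using map_tensor_pow_tensor_list[OF assms(1), of xs] xs assms(2) by auto
qed

lemma map_tensor_pow_fixed_iff_Aff:
  assumes "linear_op_map d \<Phi>" "S \<subseteq> Dens d" "\<And>\<sigma>. \<sigma> \<in> S \<Longrightarrow> \<Phi> \<sigma> = \<sigma>"
    and "\<And>\<rho>. \<rho> \<in> Dens d \<Longrightarrow> \<Phi> \<rho> \<in> S" and "\<rho> \<in> Dens (d ^ N)"
  shows "map_tensor_pow d \<Phi> N \<rho> = \<rho> \<longleftrightarrow> \<rho> \<in> Aff (d ^ N) (tensor_pow_set S N)"
proof -
  have S_carrier: "S \<subseteq> carrier_mat d d" using assms(2) Dens_carrier_mat by blast
  have T_carrier: "tensor_pow_set S N \<subseteq> carrier_mat (d ^ N) (d ^ N)"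
    using tensor_pow_set_hermitian_tr(1)[OF assms(2)] unfolding hermitian_mat_def by blast
  show ?thesis
  proof
    assume "map_tensor_pow d \<Phi> N \<rho> = \<rho>"
    moreover have "map_tensor_pow d \<Phi> N \<rho> \<in> cspan (d ^ N) (tensor_pow_set S N)"
      using map_tensor_pow_in_cspan[OF assms(1) linear_op_map_in_cspan_if_Dens[OF assms(1,4) S_carrier]]
        assms(5) Dens_carrier_mat by blast
    ultimately show "\<rho> \<in> Aff (d ^ N) (tensor_pow_set S N)"
      using assms(5) tensor_pow_set_hermitian_tr[OF assms(2)]
      by (intro Aff_if_density_in_cspan) (simp_all add: Dens_def)
  next
    assume "\<rho> \<in> Aff (d ^ N) (tensor_pow_set S N)"
    then show "map_tensor_pow d \<Phi> N \<rho> = \<rho>"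
      using linear_op_map_fixes_Aff[OF linear_op_map_map_tensor_pow T_carrier]
        map_tensor_pow_fixes_tensor_pow_set[OF assms(1) S_carrier assms(3)]
      by blast
  qed
qed

theorem theorem1:
  fixes d N :: nat
    and F F' FN :: "complex mat set"
    and \<Delta> :: "complex mat \<Rightarrow> complex mat"
  assumes "d \<ge> 1" and "N \<ge> 1"
    and "F \<subseteq> Dens d"
    and "FN \<subseteq> Dens (d ^ N)"
    and "F' \<subseteq> F" and "affine_set d F'"
    and "RC_map d F F' \<Delta>"
    and "\<forall>X \<in> carrier_mat d d. \<Delta> (\<Delta> X) = \<Delta> X"
    and "F' = {\<sigma> \<in> Dens d. \<Delta> \<sigma> = \<sigma>}"
  shows "breakable d N FN \<Delta> \<longleftrightarrow> Aff (d ^ N) (tensor_pow_set F' N) - FN \<noteq> {}"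
proof -
  have lin: "linear_op_map d \<Delta>" using assms(7) unfolding RC_map_def channel_def by blast
  have F'_Dens: "F' \<subseteq> Dens d" and F'_fixed: "\<And>\<sigma>. \<sigma> \<in> F' \<Longrightarrow> \<Delta> \<sigma> = \<sigma>" using assms(9) by auto
  have to_F': "\<Delta> \<rho> \<in> F'" if "\<rho> \<in> Dens d" for \<rho>
  proof -
    have "\<Delta> \<rho> \<in> Dens d" using that assms(3,7) unfolding RC_map_def by blast
    moreover have "\<Delta> (\<Delta> \<rho>) = \<Delta> \<rho>" using that assms(8) Dens_carrier_mat by blast
    ultimately show ?thesis using assms(9) by blast
  qed
  have "Aff (d ^ N) (tensor_pow_set F' N) \<subseteq> Dens (d ^ N)" unfolding Aff_def Dens_def by blast
  then show ?thesis
    unfolding breakable_def using map_tensor_pow_fixed_iff_Aff[OF lin F'_Dens F'_fixed to_F'] by blast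
qed

end
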